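(* Let $I\subset{\bf S}^1$ be a closed interval and let $\varphi_m:I\to{\bf S}^1$ be a sequence of $C^3$ diffeomorphisms onto their images which converges to the identity in the $C^1$-topology as $m\to\infty$, and such that the Schwarzian derivatives $S\varphi_m=(\varphi_m''/\varphi_m')'-\frac12(\varphi_m''/\varphi_m')^2$ tend uniformly to $0$ on $I$. Then $\varphi_m$ converges to the identity in the $C^3$-topology on $I$. *)

theory Defs
  imports "HOL-Analysis.Analysis"
begin

text \<open>Schwarzian derivative of a map with first, second and third derivatives
  f1, f2, f3:  (f''/f')' - 1/2 (f''/f')^2, where the derivative of the quotient
  f''/f' is written out as (f''' f' - f''^2)/f'^2.\<close>
definition schwarzian :: "(real \<Rightarrow> real) \<Rightarrow> (real \<Rightarrow> real) \<Rightarrow> (real \<Rightarrow> real) \<Rightarrow> real \<Rightarrow> real" where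
  "schwarzian f1 f2 f3 x =
     (f3 x * f1 x - (f2 x)^2) / (f1 x)^2 - 1/2 * (f2 x / f1 x)^2"

end

theory Submission
  imports Defs
begin

text \<open>The function \<open>w = (\<phi>')\<^sup>-\<^sup>1\<^sup>/\<^sup>2\<close> linearizes the Schwarzian: \<open>w'' = -(S\<phi>/2) w\<close>.
  Since \<open>\<phi>' \<rightarrow> 1\<close> and \<open>S\<phi> \<rightarrow> 0\<close> uniformly, \<open>w \<rightarrow> 1\<close> and \<open>w'' \<rightarrow> 0\<close> uniformly, and the
  interpolation inequality \<open>|w'| \<le> 2 sup|w - 1| / h + h sup|w''|\<close> on intervals of length \<open>h\<close>
  gives \<open>w' \<rightarrow> 0\<close>, hence \<open>\<phi>'' = -2 \<phi>' w' / w \<rightarrow> 0\<close>. Finally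
  \<open>\<phi>''' = S\<phi> \<phi>' + 3/2 \<phi>''\<^sup>2 / \<phi>'\<close> tends to 0 as well.\<close>

lemma has_real_derivative_inverse_sqrt:
  fixes f :: "real \<Rightarrow> real"
  assumes "(f has_real_derivative f') (at x within A)" "f x > 0"
  shows "((\<lambda>x. inverse (sqrt (f x))) has_real_derivative
           - (inverse (sqrt (f x)) * f') / (2 * f x)) (at x within A)"
proof -
  have "((\<lambda>x. sqrt (f x)) has_real_derivative inverse (sqrt (f x)) / 2 * f') (at x within A)"
    using DERIV_chain2[OF DERIV_real_sqrt[OF assms(2)] assms(1)] .
  from DERIV_inverse_fun[OF this] show ?thesis
    using assms(2) by (simp add: field_simps)
qed

lemma schwarzian_linearization:
  fixes w f1 f2 f3 :: "real \<Rightarrow> real"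
  assumes d2: "(f1 has_real_derivative f2 x) (at x within A)"
    and d3: "(f2 has_real_derivative f3 x) (at x within A)"
    and dw: "(w has_real_derivative - (w x * f2 x) / (2 * f1 x)) (at x within A)"
    and pos: "f1 x > 0"
  shows "((\<lambda>x. - (w x * f2 x) / (2 * f1 x)) has_real_derivative
           - schwarzian f1 f2 f3 x / 2 * w x) (at x within A)"
proof -
  let ?w1 = "- (w x * f2 x) / (2 * f1 x)"
  have "((\<lambda>x. - (w x * f2 x / (2 * f1 x))) has_real_derivative
      - (((w x * f3 x + ?w1 * f2 x) * (2 * f1 x) - w x * f2 x * (2 * f2 x))
        / (2 * f1 x * (2 * f1 x)))) (at x within A)"
    using pos by (intro DERIV_minus DERIV_divide DERIV_mult' DERIV_cmult dw d2 d3) auto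
  moreover have "- (((w x * f3 x + ?w1 * f2 x) * (2 * f1 x) - w x * f2 x * (2 * f2 x))
        / (2 * f1 x * (2 * f1 x))) = - schwarzian f1 f2 f3 x / 2 * w x"
    using pos by (simp add: schwarzian_def field_simps power2_eq_square)
  ultimately show ?thesis
    by (simp only: minus_divide_left)
qed

lemma deriv_bound_interpolation:
  fixes g g1 g2 :: "real \<Rightarrow> real"
  assumes h: "0 < h" "h \<le> b - a"
    and dg: "\<And>x. x \<in> {a..b} \<Longrightarrow> (g has_real_derivative g1 x) (at x within {a..b})"
    and dg1: "\<And>x. x \<in> {a..b} \<Longrightarrow> (g1 has_real_derivative g2 x) (at x within {a..b})"
    and g_close: "\<And>x. x \<in> {a..b} \<Longrightarrow> \<bar>g x - c\<bar> \<le> e0"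
    and g2_bound: "\<And>x. x \<in> {a..b} \<Longrightarrow> \<bar>g2 x\<bar> \<le> e2"
    and x: "x \<in> {a..b}"
  shows "\<bar>g1 x\<bar> \<le> 2 * e0 / h + e2 * h"
proof -
  define l where "l = min x (b - h)"
  have sub: "{l..l + h} \<subseteq> {a..b}" and x_in: "x \<in> {l..l + h}"
    using h x by (auto simp: l_def)
  have der: "\<And>t. l \<le> t \<Longrightarrow> t \<le> l + h \<Longrightarrow> (g has_derivative (\<lambda>s. g1 t * s)) (at t within {l..l + h})"
    using dg sub by (metis atLeastAtMost_iff has_field_derivative_def has_derivative_subset subsetD)
  then obtain z where z: "z \<in> {l..l + h}" "g (l + h) - g l = g1 z * h"
    using mvt_very_simple[of l "l + h" g, OF _ der] h by auto
  have "\<bar>g1 z\<bar> * h \<le> 2 * e0"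
    using z(2) g_close[of l] g_close[of "l + h"] sub h by (auto simp: abs_mult)
  then have "\<bar>g1 z\<bar> \<le> 2 * e0 / h"
    using h by (simp add: field_simps)
  moreover have "\<bar>g1 x - g1 z\<bar> \<le> e2 * \<bar>x - z\<bar>"
    using field_differentiable_bound[of "{a..b}" g1 g2 e2 x z] dg1 g2_bound x z sub by auto
  moreover have "e2 * \<bar>x - z\<bar> \<le> e2 * h"
    using g2_bound[OF x] x_in z by (intro mult_left_mono) auto
  ultimately show ?thesis by linarith
qed

lemma inverse_sqrt_near_one:
  fixes p :: real
  assumes "1/2 \<le> p" "p \<le> 3/2"
  shows "1/2 \<le> inverse (sqrt p)" "inverse (sqrt p) \<le> 2"
    and "\<bar>inverse (sqrt p) - 1\<bar> \<le> 2 * \<bar>p - 1\<bar>"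
proof -
  define s where "s = sqrt p"
  have s: "1/2 \<le> s" "s \<le> 2"
    using assms real_le_rsqrt[of "1/2" p] real_le_lsqrt[of 2 p] by (auto simp: s_def power2_eq_square)
  then show "1/2 \<le> inverse (sqrt p)" "inverse (sqrt p) \<le> 2"
    by (simp_all add: s_def[symmetric] field_simps)
  have "s * 1 \<le> s * (1 + s)"
    using s by (intro mult_left_mono) auto
  then have denom: "1/2 \<le> s * (1 + s)"
    using s by linarith
  have "s\<^sup>2 = p"
    using assms by (simp add: s_def)
  then have "(inverse s - 1) * (s * (1 + s)) = 1 - p"
    using s by (simp add: field_simps power2_eq_square)
  then have "\<bar>inverse s - 1\<bar> * (s * (1 + s)) = \<bar>p - 1\<bar>"
    using denom abs_mult[of "inverse s - 1" "s * (1 + s)"] abs_minus_commute[of p 1] by simp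
  moreover have "\<bar>inverse s - 1\<bar> * (1/2) \<le> \<bar>inverse s - 1\<bar> * (s * (1 + s))"
    using denom by (intro mult_left_mono) auto
  ultimately show "\<bar>inverse (sqrt p) - 1\<bar> \<le> 2 * \<bar>p - 1\<bar>"
    by (simp add: s_def)
qed

lemma second_deriv_bound_by_schwarzian:
  fixes f1 f2 f3 :: "real \<Rightarrow> real"
  assumes h: "0 < h" "h \<le> b - a"
    and d2: "\<And>x. x \<in> {a..b} \<Longrightarrow> (f1 has_real_derivative f2 x) (at x within {a..b})"
    and d3: "\<And>x. x \<in> {a..b} \<Longrightarrow> (f2 has_real_derivative f3 x) (at x within {a..b})"
    and f1_close: "\<And>x. x \<in> {a..b} \<Longrightarrow> \<bar>f1 x - 1\<bar> \<le> \<delta>" "\<delta> \<le> 1/2"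
    and S_bound: "\<And>x. x \<in> {a..b} \<Longrightarrow> \<bar>schwarzian f1 f2 f3 x\<bar> \<le> \<sigma>"
    and x: "x \<in> {a..b}"
  shows "\<bar>f2 x\<bar> \<le> 6 * (4 * \<delta> / h + \<sigma> * h)"
proof -
  define w where "w = (\<lambda>x. inverse (sqrt (f1 x)))"
  define w1 where "w1 = (\<lambda>x. - (w x * f2 x) / (2 * f1 x))"
  have f1: "1/2 \<le> f1 y" "f1 y \<le> 3/2" if "y \<in> {a..b}" for y
    using f1_close(1)[OF that] f1_close(2) by (auto simp: abs_le_iff)
  have w_near: "1/2 \<le> w y" "w y \<le> 2" "\<bar>w y - 1\<bar> \<le> 2 * \<bar>f1 y - 1\<bar>" if "y \<in> {a..b}" for y
    unfolding w_def using inverse_sqrt_near_one f1[OF that] by auto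
  have dw: "(w has_real_derivative w1 y) (at y within {a..b})" if "y \<in> {a..b}" for y
    unfolding w_def w1_def using has_real_derivative_inverse_sqrt[OF d2] f1 that by fastforce
  have dw1: "(w1 has_real_derivative - schwarzian f1 f2 f3 y / 2 * w y) (at y within {a..b})"
    if "y \<in> {a..b}" for y
    unfolding w1_def by (rule schwarzian_linearization[OF d2 d3 dw[unfolded w1_def]])
      (use f1(1)[OF that] that in auto)
  have "\<bar>w y - 1\<bar> \<le> 2 * \<delta>" if "y \<in> {a..b}" for y
    using order_trans[OF w_near(3)[OF that]] f1_close(1)[OF that] by simp
  moreover have "\<bar>- schwarzian f1 f2 f3 y / 2 * w y\<bar> \<le> \<sigma>" if "y \<in> {a..b}" for y
  proof -
    have "\<bar>schwarzian f1 f2 f3 y\<bar> * w y \<le> \<sigma> * 2"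
      using S_bound[OF that] w_near[OF that] by (intro mult_mono) auto
    then show ?thesis
      using w_near(1)[OF that] by (simp add: abs_mult)
  qed
  ultimately have w1_bound: "\<bar>w1 x\<bar> \<le> 2 * (2 * \<delta>) / h + \<sigma> * h"
    by (intro deriv_bound_interpolation[OF h dw dw1 _ _ x])
  have "\<bar>f2 x\<bar> = 2 * f1 x * inverse (w x) * \<bar>w1 x\<bar>"
    using f1[OF x] w_near(1)[OF x] by (simp add: w1_def abs_mult field_simps)
  also have "\<dots> \<le> 2 * (3/2) * 2 * \<bar>w1 x\<bar>"
    using f1[OF x] w_near(1)[OF x] le_imp_inverse_le[OF w_near(1)[OF x]] by (intro mult_right_mono mult_mono) auto
  finally show ?thesis
    using w1_bound by simp
qed

lemma third_deriv_eq_schwarzian: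
  fixes f1 f2 f3 :: "real \<Rightarrow> real"
  assumes "f1 x \<noteq> 0"
  shows "f3 x = schwarzian f1 f2 f3 x * f1 x + 3/2 * (f2 x * f2 x) / f1 x"
  using assms by (simp add: schwarzian_def field_simps power2_eq_square)

lemma uniform_limit_third_deriv_of_schwarzian:
  fixes f1 f2 f3 :: "nat \<Rightarrow> real \<Rightarrow> real"
  assumes nz: "\<And>n x. x \<in> A \<Longrightarrow> f1 n x \<noteq> 0"
    and f1_lim: "uniform_limit A f1 (\<lambda>x. 1) sequentially"
    and f2_lim: "uniform_limit A f2 (\<lambda>x. 0) sequentially"
    and S_lim: "uniform_limit A (\<lambda>n. schwarzian (f1 n) (f2 n) (f3 n)) (\<lambda>x. 0) sequentially"
  shows "uniform_limit A f3 (\<lambda>x. 0) sequentially"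
proof -
  have f3_eq: "f3 n x = schwarzian (f1 n) (f2 n) (f3 n) x * f1 n x + 3/2 * (f2 n x * f2 n x) / f1 n x"
    if "x \<in> A" for n x
    by (rule third_deriv_eq_schwarzian) (rule nz[OF that])
  have "uniform_limit A
      (\<lambda>n x. schwarzian (f1 n) (f2 n) (f3 n) x * f1 n x + 3/2 * (f2 n x * f2 n x) / f1 n x)
      (\<lambda>x. 0 * 1 + 3/2 * (0 * 0) / 1) sequentially"
    by (intro uniform_limit_add uniform_lim_mult uniform_lim_divide uniform_limit_const
        f1_lim f2_lim S_lim) (auto simp: image_constant_conv)
  moreover have "uniform_limit A f3 (\<lambda>x. 0) sequentially \<longleftrightarrow> uniform_limit A
      (\<lambda>n x. schwarzian (f1 n) (f2 n) (f3 n) x * f1 n x + 3/2 * (f2 n x * f2 n x) / f1 n x)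
      (\<lambda>x. 0 * 1 + 3/2 * (0 * 0) / 1) sequentially"
    by (rule uniform_limit_cong') (erule f3_eq, simp)
  ultimately show ?thesis
    by blast
qed

lemma uniform_limit_second_deriv_of_schwarzian:
  fixes f1 f2 f3 :: "nat \<Rightarrow> real \<Rightarrow> real"
  assumes ab: "a < b"
    and d2: "\<And>n x. x \<in> {a..b} \<Longrightarrow> (f1 n has_real_derivative f2 n x) (at x within {a..b})"
    and d3: "\<And>n x. x \<in> {a..b} \<Longrightarrow> (f2 n has_real_derivative f3 n x) (at x within {a..b})"
    and f1_lim: "uniform_limit {a..b} f1 (\<lambda>x. 1) sequentially"
    and S_lim: "uniform_limit {a..b} (\<lambda>n. schwarzian (f1 n) (f2 n) (f3 n)) (\<lambda>x. 0) sequentially"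
  shows "uniform_limit {a..b} f2 (\<lambda>x. 0) sequentially"
proof (rule uniform_limitI)
  fix e :: real
  assume "0 < e"
  define h where "h = min (b - a) (e / 24)"
  define \<delta> where "\<delta> = min (1/2) (e * h / 96)"
  have h: "0 < h" "h \<le> b - a" "h \<le> e / 24"
    using ab \<open>0 < e\<close> unfolding h_def by linarith+
  have \<delta>: "0 < \<delta>" "\<delta> \<le> 1/2" "4 * \<delta> / h \<le> e / 24"
    using \<open>0 < e\<close> h by (auto simp: \<delta>_def field_simps)
  have "\<forall>\<^sub>F n in sequentially. \<forall>x\<in>{a..b}. \<bar>f1 n x - 1\<bar> < \<delta>"
    using uniform_limitD[OF f1_lim \<delta>(1)] by (simp add: dist_real_def)
  moreover have "\<forall>\<^sub>F n in sequentially. \<forall>x\<in>{a..b}. \<bar>schwarzian (f1 n) (f2 n) (f3 n) x\<bar> < 1"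
    using uniform_limitD[OF S_lim zero_less_one] by (simp add: dist_real_def)
  ultimately show "\<forall>\<^sub>F n in sequentially. \<forall>x\<in>{a..b}. dist (f2 n x) 0 < e"
  proof eventually_elim
    case (elim n)
    show ?case
    proof
      fix x
      assume "x \<in> {a..b}"
      then have "\<bar>f2 n x\<bar> \<le> 6 * (4 * \<delta> / h + 1 * h)"
        using elim \<delta>(2)
        by (intro second_deriv_bound_by_schwarzian[OF h(1,2) d2 d3]) (auto simp: less_imp_le)
      then show "dist (f2 n x) 0 < e"
        using \<delta>(3) h(3) \<open>0 < e\<close> by (simp add: dist_real_def)
    qed
  qed
qed

theorem lemma5:
  fixes a b :: real
    and \<phi> \<phi>1 \<phi>2 \<phi>3 :: "nat \<Rightarrow> real \<Rightarrow> real"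
  assumes ab: "a < b" "b - a < 1"
    and d1: "\<And>m x. x \<in> {a..b} \<Longrightarrow> (\<phi> m has_real_derivative \<phi>1 m x) (at x within {a..b})"
    and d2: "\<And>m x. x \<in> {a..b} \<Longrightarrow> (\<phi>1 m has_real_derivative \<phi>2 m x) (at x within {a..b})"
    and d3: "\<And>m x. x \<in> {a..b} \<Longrightarrow> (\<phi>2 m has_real_derivative \<phi>3 m x) (at x within {a..b})"
    and c3: "\<And>m. continuous_on {a..b} (\<phi>3 m)"
    and nz: "\<And>m x. x \<in> {a..b} \<Longrightarrow> \<phi>1 m x \<noteq> 0"
    and inj: "\<And>m. inj_on (\<lambda>x. frac (\<phi> m x)) {a..b}"
    and C1_0: "uniform_limit {a..b} \<phi> (\<lambda>x. x) sequentially"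
    and C1_1: "uniform_limit {a..b} \<phi>1 (\<lambda>x. 1) sequentially"
    and S: "uniform_limit {a..b} (\<lambda>m. schwarzian (\<phi>1 m) (\<phi>2 m) (\<phi>3 m)) (\<lambda>x. 0) sequentially"
  shows "uniform_limit {a..b} \<phi> (\<lambda>x. x) sequentially
       \<and> uniform_limit {a..b} \<phi>1 (\<lambda>x. 1) sequentially
       \<and> uniform_limit {a..b} \<phi>2 (\<lambda>x. 0) sequentially
       \<and> uniform_limit {a..b} \<phi>3 (\<lambda>x. 0) sequentially"
proof -
  have \<phi>2_lim: "uniform_limit {a..b} \<phi>2 (\<lambda>x. 0) sequentially"
    using uniform_limit_second_deriv_of_schwarzian[OF ab(1) d2 d3 C1_1 S] .
  moreover have "uniform_limit {a..b} \<phi>3 (\<lambda>x. 0) sequentially"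
    using uniform_limit_third_deriv_of_schwarzian[OF nz C1_1 \<phi>2_lim S] .
  ultimately show ?thesis
    using C1_0 C1_1 by blast
qed

end
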